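(* In the situation of Theorem 2 (a fully regular system $A(y)=b$ with $A=A_\ell\sigma^\ell+\dots+A_0$, $A_i\in\mathbb{F}[t]^{n\times n}$, $b\in\mathbb{F}[t]^n$, $\det A_\ell\neq 0$; a $P\in\mathrm{GL}_n(\mathbb{F}(t)[\sigma,\sigma^{-1}])$ with $PA=\sum_{i=0}^{\tilde\ell}\tilde A_i\sigma^i$, $\tilde A_i\in\mathbb{F}[t]^{n\times n}$, $P(b)\in\mathbb{F}[t]^n$, $\det\tilde A_0\ne0$; $m$ the common denominator of $A_\ell^{-1}$, $p$ the common denominator of $\tilde A_0^{-1}$; and a solution $y=d^{-1}z$ in reduced representation), one has $$\mathrm{disp}(\operatorname{ap}(d))\le\mathrm{disp}\big(\sigma^{-\ell}(\operatorname{ap}(m)),\operatorname{ap}(p)\big).$$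
   Context: All fields contain $\mathbb{Q}$. $(\mathbb{F}(t),\sigma)$ is a $\Pi\Sigma$-extension of the difference field $(\mathbb{F},\sigma)$: $\sigma$ is an automorphism of the rational function field $\mathbb{F}(t)$ restricting to an automorphism of $\mathbb{F}$, with $\sigma(t)=t+\beta$ ($\beta\in\mathbb{F}\setminus\{0\}$, $\Sigma$-monomial) or $\sigma(t)=\alpha t$ ($\alpha\in\mathbb{F}\setminus\{0\}$, $\Pi$-monomial), and the fixed field of $\sigma$ on $\mathbb{F}(t)$ equals that on $\mathbb{F}$. For $a,b\in\mathbb{F}[t]\setminus\{0\}$: $\mathrm{spread}(a,b)=\{k\ge0:\gcd(a,\sigma^k(b))\notin\mathbb{F}\}$, $\mathrm{disp}(a,b)=\max\mathrm{spread}(a,b)$ ($\max\emptyset=-\infty$, max of infinite set $=\infty$), $\mathrm{disp}(a)=\mathrm{disp}(a,a)$. $\mathrm{per}(a)=1$ for a $\Sigma$-monomial, $t^\mu$ with $\mu$ maximal such that $t^\mu\mid a$ for a $\Pi$-monomial; $\operatorname{ap}(a)=a/\mathrm{per}(a)$. Reduced representation: $d\in\mathbb{F}[t]\setminus\{0\}$, $z\in\mathbb{F}[t]^n$, $\gcd(z_1,\dots,z_n,d)=1$. $\mathbb{F}(t)[\sigma]$ is the Ore polynomial ring with $\sigma a=\sigma(a)\sigma$, $\mathbb{F}(t)[\sigma,\sigma^{-1}]$ its localisation at powers of $\sigma$; operators act on $\mathbb{F}(t)$ by $(\sum a_i\sigma^i)(\alpha)=\sum a_i\sigma^i(\alpha)$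 and operator matrices act on vectors entrywise as matrix–vector products; unimodular means invertible over the same ring. A square system $A(y)=b$ with $A=\sum_{i=0}^\ell A_i\sigma^i$ is fully regular if $\det A_\ell\ne0$ and there is a unimodular $P$ over $\mathbb{F}(t)[\sigma,\sigma^{-1}]$ with $PA\in\mathbb{F}(t)[\sigma]^{n\times n}$ having trailing coefficient matrix of nonzero determinant. *)

theory Defs
  imports "HOL-Computational_Algebra.Computational_Algebra" "HOL-Library.Extended_Real"
    "Jordan_Normal_Form.Determinant" "Jordan_Normal_Form.Gauss_Jordan_Elimination"
begin

text \<open>The ground field F is a type 'a of class field_char_0 (contains Q); F[t] = 'a poly,
  F(t) = 'a poly fract.  The difference operator sigma is an automorphism of F(t).\<close>

definition pf :: "'a::idom \<Rightarrow> 'a fract" where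
  "pf p = Fract p 1"

definition Tvar :: "'a::field poly fract" where
  "Tvar = pf [:0, 1:]"

definition constF :: "'a::field poly fract set" where
  "constF = range (\<lambda>c. pf [:c:])"

definition is_field_aut :: "('k::field \<Rightarrow> 'k) \<Rightarrow> bool" where
  "is_field_aut \<sigma> \<longleftrightarrow> bij \<sigma> \<and> (\<forall>x y. \<sigma> (x + y) = \<sigma> x + \<sigma> y) \<and> (\<forall>x y. \<sigma> (x * y) = \<sigma> x * \<sigma> y)"

definition sigma_pow :: "('k \<Rightarrow> 'k) \<Rightarrow> int \<Rightarrow> 'k \<Rightarrow> 'k" where
  "sigma_pow \<sigma> k = (if k \<ge> 0 then \<sigma> ^^ nat k else (inv_into UNIV \<sigma>) ^^ nat (- k))"

definition Sigma_monomial :: "('a::field poly fract \<Rightarrow> 'a poly fract) \<Rightarrow> bool" where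
  "Sigma_monomial \<sigma> \<longleftrightarrow> (\<exists>\<beta>. \<beta> \<noteq> 0 \<and> \<sigma> Tvar = Tvar + pf [:\<beta>:])"

definition Pi_monomial :: "('a::field poly fract \<Rightarrow> 'a poly fract) \<Rightarrow> bool" where
  "Pi_monomial \<sigma> \<longleftrightarrow> (\<exists>\<alpha>. \<alpha> \<noteq> 0 \<and> \<sigma> Tvar = pf [:\<alpha>:] * Tvar)"

definition PiSigma_ext :: "('a::field poly fract \<Rightarrow> 'a poly fract) \<Rightarrow> bool" where
  "PiSigma_ext \<sigma> \<longleftrightarrow> is_field_aut \<sigma> \<and> \<sigma> ` constF = constF
     \<and> (Sigma_monomial \<sigma> \<or> Pi_monomial \<sigma>)
     \<and> {x. \<sigma> x = x} = {x \<in> constF. \<sigma> x = x}"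

text \<open>sigma^k applied to a polynomial (the result is again a polynomial).\<close>
definition sig_poly :: "('a::field poly fract \<Rightarrow> 'a poly fract) \<Rightarrow> int \<Rightarrow> 'a poly \<Rightarrow> 'a poly" where
  "sig_poly \<sigma> k p = (THE q. pf q = sigma_pow \<sigma> k (pf p))"

definition spread :: "('a::{field_gcd,field_char_0} poly fract \<Rightarrow> 'a poly fract) \<Rightarrow> 'a poly \<Rightarrow> 'a poly \<Rightarrow> nat set" where
  "spread \<sigma> a b = {k. degree (gcd a (sig_poly \<sigma> (int k) b)) \<noteq> 0}"

text \<open>max of the spread, with max {} = -infinity and max of an infinite set = infinity.\<close>
definition disp :: "('a::{field_gcd,field_char_0} poly fract \<Rightarrow> 'a poly fract) \<Rightarrow> 'a poly \<Rightarrow> 'a poly \<Rightarrow> ereal" where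
  "disp \<sigma> a b = Sup ((\<lambda>k. ereal (real k)) ` spread \<sigma> a b)"

definition per :: "('a::field poly fract \<Rightarrow> 'a poly fract) \<Rightarrow> 'a poly \<Rightarrow> 'a poly" where
  "per \<sigma> a = (if Pi_monomial \<sigma> then [:0, 1:] ^ order 0 a else 1)"

definition ap :: "('a::field poly fract \<Rightarrow> 'a poly fract) \<Rightarrow> 'a poly \<Rightarrow> 'a poly" where
  "ap \<sigma> a = a div per \<sigma> a"

text \<open>Elements of F(t)[sigma, sigma^-1]: coefficient functions int => F(t) with finite support
  (L represents sum_i L i * sigma^i).  Operator matrices: nat => nat => (int => F(t)), indices < n.\<close>

definition ore_mult :: "('k::field \<Rightarrow> 'k) \<Rightarrow> (int \<Rightarrow> 'k) \<Rightarrow> (int \<Rightarrow> 'k) \<Rightarrow> (int \<Rightarrow> 'k)" where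
  "ore_mult \<sigma> L1 L2 = (\<lambda>k. \<Sum>i\<in>{i. L1 i \<noteq> 0}. L1 i * sigma_pow \<sigma> i (L2 (k - i)))"

definition op_apply :: "('k::field \<Rightarrow> 'k) \<Rightarrow> (int \<Rightarrow> 'k) \<Rightarrow> 'k \<Rightarrow> 'k" where
  "op_apply \<sigma> L y = (\<Sum>i\<in>{i. L i \<noteq> 0}. L i * sigma_pow \<sigma> i y)"

definition omat_mult :: "('k::field \<Rightarrow> 'k) \<Rightarrow> nat \<Rightarrow> (nat \<Rightarrow> nat \<Rightarrow> int \<Rightarrow> 'k) \<Rightarrow> (nat \<Rightarrow> nat \<Rightarrow> int \<Rightarrow> 'k) \<Rightarrow> (nat \<Rightarrow> nat \<Rightarrow> int \<Rightarrow> 'k)" where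
  "omat_mult \<sigma> n P Q = (\<lambda>r c k. \<Sum>l<n. ore_mult \<sigma> (P r l) (Q l c) k)"

definition omat_one :: "nat \<Rightarrow> nat \<Rightarrow> int \<Rightarrow> 'k::field" where
  "omat_one = (\<lambda>r c k. if r = c \<and> k = 0 then 1 else 0)"

definition omat_apply :: "('k::field \<Rightarrow> 'k) \<Rightarrow> nat \<Rightarrow> (nat \<Rightarrow> nat \<Rightarrow> int \<Rightarrow> 'k) \<Rightarrow> (nat \<Rightarrow> 'k) \<Rightarrow> (nat \<Rightarrow> 'k)" where
  "omat_apply \<sigma> n M y = (\<lambda>r. \<Sum>c<n. op_apply \<sigma> (M r c) (y c))"

definition finite_omat :: "nat \<Rightarrow> (nat \<Rightarrow> nat \<Rightarrow> int \<Rightarrow> 'k::field) \<Rightarrow> bool" where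
  "finite_omat n M \<longleftrightarrow> (\<forall>r<n. \<forall>c<n. finite {k. M r c k \<noteq> 0})"

definition unimodular :: "('k::field \<Rightarrow> 'k) \<Rightarrow> nat \<Rightarrow> (nat \<Rightarrow> nat \<Rightarrow> int \<Rightarrow> 'k) \<Rightarrow> bool" where
  "unimodular \<sigma> n P \<longleftrightarrow> finite_omat n P \<and>
     (\<exists>Q. finite_omat n Q \<and> (\<forall>r<n. \<forall>c<n. omat_mult \<sigma> n P Q r c = omat_one r c
                                             \<and> omat_mult \<sigma> n Q P r c = omat_one r c))"

definition poly_omat :: "nat \<Rightarrow> (nat \<Rightarrow> nat \<Rightarrow> nat \<Rightarrow> 'a::idom) \<Rightarrow> (nat \<Rightarrow> nat \<Rightarrow> int \<Rightarrow> 'a fract)" where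
  "poly_omat l C = (\<lambda>r c k. if 0 \<le> k \<and> k \<le> int l then pf (C (nat k) r c) else 0)"

definition pmat :: "nat \<Rightarrow> (nat \<Rightarrow> nat \<Rightarrow> 'a) \<Rightarrow> 'a mat" where
  "pmat n M = mat n n (\<lambda>(r, c). M r c)"

definition common_denom :: "nat \<Rightarrow> 'a::idom fract mat \<Rightarrow> 'a \<Rightarrow> bool" where
  "common_denom n M m \<longleftrightarrow> m \<noteq> 0 \<and> (\<forall>r<n. \<forall>c<n. \<exists>q. pf m * M $$ (r, c) = pf q)"

definition the_common_denom :: "nat \<Rightarrow> 'a::idom fract mat \<Rightarrow> 'a \<Rightarrow> bool" where
  "the_common_denom n M m \<longleftrightarrow> common_denom n M m \<and> (\<forall>m'. common_denom n M m' \<longrightarrow> m dvd m')"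

end

theory Submission
  imports Defs
begin

text \<open>Let an irreducible \<open>f\<close> divide \<open>ap(d)\<close> together with its shift \<open>\<sigma>^k f\<close>. Since \<open>f\<close> does
  not divide \<open>per\<close>, it is aperiodic (by Karr's theorem on semi-invariant polynomials), so only
  finitely many shifts of \<open>f\<close> divide \<open>d\<close>; renaming the lowest one \<open>f\<close>, the shifts \<open>\<sigma>^j f\<close>
  dividing \<open>d\<close> are those with \<open>0 \<le> j \<le> K\<close> for some \<open>K \<ge> k\<close>, both ends being attained.
  Clearing the denominators \<open>\<sigma>^i d\<close> of \<open>\<sigma>^i y\<close> for \<open>i < l\<close> and solving for the leading term with
  \<open>A_l\<^sup>-\<^sup>1\<close> gives \<open>\<sigma>^l d | m (\<Prod>_{i<l} \<sigma>^i d) \<sigma>^l z_c\<close>; doing the same for \<open>PA\<close> and its trailing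
  coefficient gives \<open>d | p (\<Prod>_{1\<le>i} \<sigma>^i d) z_c\<close>. By reducedness some \<open>z_c\<close> is not divisible by
  \<open>\<sigma>^K f\<close> (resp. \<open>f\<close>), and by extremality no other factor on the right is, so \<open>\<sigma>^(K+l) f | m\<close>
  and \<open>f | p\<close>. Being coprime to \<open>per\<close>, these factors divide \<open>ap(m)\<close> and \<open>ap(p)\<close>, whence
  \<open>K \<in> spread(\<sigma>^-l ap(m), ap(p))\<close>.\<close>

section \<open>Polynomials inside the rational function field\<close>

lemma pf_add [simp]: "pf (a + b) = pf a + pf b"
  by (simp add: pf_def)

lemma pf_mult [simp]: "pf (a * b) = pf a * pf b"
  by (simp add: pf_def)

lemma pf_0 [simp]: "pf 0 = 0"
  by (simp add: pf_def Zero_fract_def)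

lemma pf_1 [simp]: "pf 1 = 1"
  by (simp add: pf_def One_fract_def)

lemma pf_eq_iff [simp]: "pf a = pf b \<longleftrightarrow> a = b"
  by (simp add: pf_def eq_fract)

lemma pf_eq_0_iff [simp]: "pf a = 0 \<longleftrightarrow> a = 0"
  by (metis pf_0 pf_eq_iff)

interpretation pf: inj_comm_ring_hom "pf :: 'a::idom \<Rightarrow> 'a fract"
  by unfold_locales auto

lemma pf_div_in_range_iff:
  assumes "b \<noteq> 0"
  shows "pf a / pf b \<in> range pf \<longleftrightarrow> b dvd a"
proof
  assume "pf a / pf b \<in> range pf"
  then obtain q where "pf a / pf b = pf q" by auto
  then have "pf a = pf q * pf b" using assms by (simp add: divide_eq_eq)
  then show "b dvd a" by (metis pf_mult pf_eq_iff dvd_triv_right)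
next
  assume "b dvd a"
  then obtain q where "a = b * q" ..
  then show "pf a / pf b \<in> range pf" using assms by simp
qed

lemma range_pf_add: "x \<in> range pf \<Longrightarrow> y \<in> range pf \<Longrightarrow> x + y \<in> range pf"
  by clarsimp (metis pf_add rangeI)

lemma range_pf_diff: "x \<in> range pf \<Longrightarrow> y \<in> range pf \<Longrightarrow> x - y \<in> range pf"
  by clarsimp (metis pf.hom_minus rangeI)

lemma range_pf_mult: "x \<in> range pf \<Longrightarrow> y \<in> range pf \<Longrightarrow> x * y \<in> range pf"
  by clarsimp (metis pf_mult rangeI)

lemma range_pf_sum: "(\<And>x. x \<in> A \<Longrightarrow> f x \<in> range pf) \<Longrightarrow> sum f A \<in> range pf"
proof (induction A rule: infinite_finite_induct)
  case (infinite A)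
  then show ?case by (metis pf_0 rangeI sum.infinite)
next
  case empty
  then show ?case by (metis pf_0 rangeI sum.empty)
next
  case (insert x F)
  then show ?case by (simp add: range_pf_add)
qed

lemma pCons_eq_const_plus_t_mult: "pCons a p = [:a:] + [:0, 1:] * (p :: 'a::comm_ring_1 poly)"
  by (simp add: poly_eq_iff coeff_pCons split: nat.split)

lemma pf_pCons: "pf (pCons a p) = pf [:a:] + Tvar * pf p"
proof -
  have "pf (pCons a p) = pf [:a:] + pf [:0, 1:] * pf p"
    by (metis pCons_eq_const_plus_t_mult pf_add pf_mult)
  then show ?thesis by (simp only: Tvar_def)
qed

lemma pf_linear: "pf [:b, a:] = pf [:b:] + pf [:a:] * Tvar"
  by (subst pf_pCons) (simp add: mult.commute)

lemma pf_monic_linear: "pf [:b, 1:] = Tvar + pf [:b:]"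
  using pf_linear[of b 1] by (simp add: pCons_one add.commute)

lemma comm_ring_hom_range_pf:
  assumes "comm_ring_hom f" and "\<And>c. f (pf [:c:]) \<in> range pf" and "f Tvar \<in> range pf"
  shows "f (pf p) \<in> range pf"
proof -
  interpret f: comm_ring_hom f by fact
  show ?thesis
  proof (induction p)
    case 0
    show ?case by (metis f.hom_zero pf_0 rangeI)
  next
    case (pCons a p)
    have "f (pf (pCons a p)) = f (pf [:a:]) + f Tvar * f (pf p)"
      by (subst pf_pCons) (simp add: f.hom_add f.hom_mult)
    then show ?case
      using pCons assms(2,3) by (simp add: range_pf_add range_pf_mult)
  qed
qed

lemma const_in_constF: "pf [:c:] \<in> constF"
  by (simp add: constF_def)

lemma prime_dvd_t_imp_t_dvd:
  fixes f :: "'a::field poly"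
  assumes pf: "prime_elem f" and ft: "f dvd [:0, 1:]"
  shows "[:0, 1:] dvd f"
proof -
  obtain g where g: "[:0, 1:] = f * g" using ft by (auto elim: dvdE)
  have "f \<noteq> 0" and "\<not> is_unit f" using pf by (auto simp: prime_elem_def)
  then have "degree f \<noteq> 0" using is_unit_iff_degree by blast
  have "g \<noteq> 0" using g by auto
  then have "degree f + degree g = 1"
    using degree_mult_eq[OF \<open>f \<noteq> 0\<close>, of g] arg_cong[OF g, of degree] by simp
  with \<open>degree f \<noteq> 0\<close> have "degree g = 0" by simp
  with \<open>g \<noteq> 0\<close> have "is_unit g" by (simp add: is_unit_iff_degree)
  then show ?thesis using g by (metis mult_unit_dvd_iff dvd_refl)
qed

lemma Gcd_eq_1_obtains_not_dvd:
  fixes d q :: "'a::semiring_Gcd"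
  assumes "Gcd (insert d (z ` A)) = 1" and "prime_elem q" and "q dvd d"
  obtains c where "c \<in> A" and "\<not> q dvd z c"
proof -
  have "\<exists>c\<in>A. \<not> q dvd z c"
  proof (rule ccontr)
    assume "\<not> (\<exists>c\<in>A. \<not> q dvd z c)"
    then have "q dvd x" if "x \<in> insert d (z ` A)" for x
      using that assms(3) by auto
    then have "q dvd Gcd (insert d (z ` A))" by (rule Gcd_greatest)
    with assms(1,2) show False by (simp add: prime_elem_def)
  qed
  then show ?thesis using that by blast
qed

lemma pmat_left_inverse:
  fixes B :: "nat \<Rightarrow> nat \<Rightarrow> 'a::idom"
  assumes "det (pmat n B) \<noteq> 0"
  obtains Bi where "mat_inverse (map_mat pf (pmat n B)) = Some Bi"
    and "\<And>c c'. c < n \<Longrightarrow> c' < n \<Longrightarrow> (\<Sum>r<n. Bi $$ (c, r) * pf (B r c')) = (if c = c' then 1 else 0)"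
proof -
  let ?M = "map_mat pf (pmat n B)"
  have M: "?M \<in> carrier_mat n n" by (simp add: pmat_def)
  have "det ?M \<noteq> 0" using assms by (simp add: pf.hom_det)
  then have "mat_inverse ?M \<noteq> None"
    using mat_inverse(1)[OF M, where b = "()"] det_non_zero_imp_unit[OF M, where b = "()"] by blast
  then obtain Bi where Bi: "mat_inverse ?M = Some Bi" by blast
  have "Bi * ?M = 1\<^sub>m n" and "Bi \<in> carrier_mat n n"
    using mat_inverse(2)[OF M Bi] by auto
  then have "(\<Sum>r<n. Bi $$ (c, r) * pf (B r c')) = (if c = c' then 1 else 0)" if "c < n" "c' < n" for c c'
    using that by (auto simp: scalar_prod_def pmat_def lessThan_atLeast0 dest: arg_cong[of _ _ "\<lambda>M. M $$ (c, c')"])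
  with Bi show ?thesis by (rule that)
qed

lemma common_denom_clears_solution:
  fixes B :: "nat \<Rightarrow> nat \<Rightarrow> 'a::idom" and w :: "nat \<Rightarrow> 'a fract"
  assumes dB: "det (pmat n B) \<noteq> 0"
    and \<mu>: "common_denom n (the (mat_inverse (map_mat pf (pmat n B)))) \<mu>"
    and Bw: "\<And>r. r < n \<Longrightarrow> (\<Sum>c'<n. pf (B r c') * w c') \<in> range pf"
    and c: "c < n"
  shows "pf \<mu> * w c \<in> range pf"
proof -
  obtain Bi where Bi: "mat_inverse (map_mat pf (pmat n B)) = Some Bi"
    and left_inverse: "\<And>c'. c' < n \<Longrightarrow> (\<Sum>r<n. Bi $$ (c, r) * pf (B r c')) = (if c = c' then 1 else 0)"
    using pmat_left_inverse[OF dB] c by metis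
  have "(\<Sum>r<n. Bi $$ (c, r) * (\<Sum>c'<n. pf (B r c') * w c'))
      = (\<Sum>c'<n. (\<Sum>r<n. Bi $$ (c, r) * pf (B r c')) * w c')"
    unfolding sum_distrib_left sum_distrib_right by (subst sum.swap) (simp add: mult.assoc)
  also have "\<dots> = (\<Sum>c'<n. if c = c' then w c' else 0)"
    by (intro sum.cong) (simp_all add: left_inverse)
  also have "\<dots> = w c"
    using c by simp
  finally have "pf \<mu> * w c = pf \<mu> * (\<Sum>r<n. Bi $$ (c, r) * (\<Sum>c'<n. pf (B r c') * w c'))"
    by simp
  also have "\<dots> = (\<Sum>r<n. (pf \<mu> * Bi $$ (c, r)) * (\<Sum>c'<n. pf (B r c') * w c'))"
    by (simp add: sum_distrib_left mult.assoc)
  also have "\<dots> \<in> range pf"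
  proof (rule range_pf_sum)
    fix r assume r: "r \<in> {..<n}"
    then obtain q where "pf \<mu> * Bi $$ (c, r) = pf q"
      using \<mu> Bi c by (auto simp: common_denom_def)
    then have "pf \<mu> * Bi $$ (c, r) \<in> range pf" by (metis rangeI)
    moreover have "(\<Sum>c'<n. pf (B r c') * w c') \<in> range pf" using Bw r by simp
    ultimately show "pf \<mu> * Bi $$ (c, r) * (\<Sum>c'<n. pf (B r c') * w c') \<in> range pf"
      by (rule range_pf_mult)
  qed
  finally show ?thesis .
qed

section \<open>Operator matrices over a difference field\<close>

lemma op_apply_eq_sum:
  assumes "finite S" and "{i. L i \<noteq> 0} \<subseteq> S"
  shows "op_apply \<sigma> L y = (\<Sum>i\<in>S. L i * sigma_pow \<sigma> i y)"
  unfolding op_apply_def by (rule sum.mono_neutral_left) (use assms in auto)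

lemma ore_mult_eq_sum:
  assumes "finite S" and "{i. L1 i \<noteq> 0} \<subseteq> S"
  shows "ore_mult \<sigma> L1 L2 k = (\<Sum>i\<in>S. L1 i * sigma_pow \<sigma> i (L2 (k - i)))"
  unfolding ore_mult_def by (rule sum.mono_neutral_left) (use assms in auto)

lemma op_apply_sum_operators:
  assumes "finite A" and "finite S" and "\<And>a. a \<in> A \<Longrightarrow> {i. M a i \<noteq> 0} \<subseteq> S"
  shows "op_apply \<sigma> (\<lambda>k. \<Sum>a\<in>A. M a k) y = (\<Sum>a\<in>A. op_apply \<sigma> (M a) y)"
proof -
  have "{i. (\<Sum>a\<in>A. M a i) \<noteq> 0} \<subseteq> S"
    using assms(3) by (force elim: sum.not_neutral_contains_not_neutral)
  then have "op_apply \<sigma> (\<lambda>k. \<Sum>a\<in>A. M a k) y = (\<Sum>i\<in>S. \<Sum>a\<in>A. M a i * sigma_pow \<sigma> i y)"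
    by (simp add: op_apply_eq_sum[OF assms(2)] sum_distrib_right)
  also have "\<dots> = (\<Sum>a\<in>A. op_apply \<sigma> (M a) y)"
    by (subst sum.swap) (simp add: op_apply_eq_sum[OF assms(2,3)])
  finally show ?thesis .
qed

lemma omat_apply_cong:
  "(\<And>c. c < n \<Longrightarrow> M r c = M' r c) \<Longrightarrow> (\<And>c. c < n \<Longrightarrow> y c = y' c) \<Longrightarrow>
    omat_apply \<sigma> n M y r = omat_apply \<sigma> n M' y' r"
  by (simp add: omat_apply_def)

lemma poly_omat_finite: "finite_omat n (poly_omat l C)"
  unfolding finite_omat_def poly_omat_def by (auto intro: finite_subset[of _ "{0..int l}"])

lemma omat_apply_poly_omat:
  "omat_apply \<sigma> n (poly_omat l C) y r = (\<Sum>c<n. \<Sum>i\<le>l. pf (C i r c) * sigma_pow \<sigma> (int i) (y c))"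
proof -
  have "op_apply \<sigma> (poly_omat l C r c) x = (\<Sum>i\<le>l. pf (C i r c) * sigma_pow \<sigma> (int i) x)" for c x
  proof -
    have "{k. poly_omat l C r c k \<noteq> 0} \<subseteq> int ` {..l}"
      by (auto simp: poly_omat_def image_iff intro!: bexI[of _ "nat _"])
    then have "op_apply \<sigma> (poly_omat l C r c) x = (\<Sum>k\<in>int ` {..l}. poly_omat l C r c k * sigma_pow \<sigma> k x)"
      by (intro op_apply_eq_sum) auto
    also have "\<dots> = (\<Sum>i\<le>l. pf (C i r c) * sigma_pow \<sigma> (int i) x)"
      by (subst sum.reindex) (auto simp: poly_omat_def)
    finally show ?thesis .
  qed
  then show ?thesis by (simp add: omat_apply_def)
qed

locale difference_field =
  fixes \<sigma> :: "'k::field \<Rightarrow> 'k"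
  assumes field_aut: "is_field_aut \<sigma>"
begin

lemma bij_sigma: "bij \<sigma>"
  using field_aut by (simp add: is_field_aut_def)

lemma field_isom_sigma: "field_isom \<sigma>"
proof -
  have add: "\<sigma> (x + y) = \<sigma> x + \<sigma> y" and mult: "\<sigma> (x * y) = \<sigma> x * \<sigma> y" for x y
    using field_aut by (auto simp: is_field_aut_def)
  obtain x where "\<sigma> x = 1" using bij_sigma by (metis bij_pointE)
  then have "\<sigma> 1 = 1" using mult[of 1 x] by simp
  moreover have "\<sigma> 0 = 0" using add[of 0 0] by (metis add_cancel_left_right add_0)
  ultimately show ?thesis
    by unfold_locales (use add mult bij_sigma in \<open>auto simp: bij_is_surj\<close>)
qed

sublocale aut: field_isom \<sigma>
  by (rule field_isom_sigma)

declare aut.f_eq_iff [simp del] aut.inv_f_eq_iff [simp del]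

lemma inv_sigma [simp]: "inv_into UNIV \<sigma> (\<sigma> x) = x"
  using bij_sigma by (simp add: bij_is_inj)

lemma sigma_inv [simp]: "\<sigma> (inv_into UNIV \<sigma> x) = x"
  using bij_sigma by (simp add: bij_is_surj surj_f_inv_f)

lemma sigma_pow_0 [simp]: "sigma_pow \<sigma> 0 x = x"
  by (simp add: sigma_pow_def)

lemma sigma_pow_1: "sigma_pow \<sigma> 1 x = \<sigma> x"
  by (simp add: sigma_pow_def)

lemma sigma_pow_succ: "sigma_pow \<sigma> (k + 1) x = \<sigma> (sigma_pow \<sigma> k x)"
proof (cases "k \<ge> 0")
  case True
  then have "nat (k + 1) = Suc (nat k)" by simp
  with True show ?thesis by (simp add: sigma_pow_def)
next
  case False
  define j where "j = nat (- k) - 1"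
  have j: "nat (- k) = Suc j" using False by (simp add: j_def)
  have "sigma_pow \<sigma> (k + 1) x = (inv_into UNIV \<sigma> ^^ j) x"
  proof (cases "j = 0")
    case True
    then have "k + 1 = 0" using j False by simp
    with True show ?thesis by simp
  next
    case False
    then have "\<not> 0 \<le> k + 1" "nat (- (k + 1)) = j" using j \<open>\<not> k \<ge> 0\<close> by auto
    then show ?thesis by (simp add: sigma_pow_def)
  qed
  moreover have "sigma_pow \<sigma> k x = inv_into UNIV \<sigma> ((inv_into UNIV \<sigma> ^^ j) x)"
    using False j by (simp add: sigma_pow_def)
  ultimately show ?thesis by simp
qed

lemma sigma_pow_pred: "sigma_pow \<sigma> (k - 1) x = inv_into UNIV \<sigma> (sigma_pow \<sigma> k x)"
  using sigma_pow_succ[of "k - 1" x] by simp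

lemma sigma_pow_sigma_pow [simp]: "sigma_pow \<sigma> a (sigma_pow \<sigma> b x) = sigma_pow \<sigma> (a + b) x"
proof (induction a rule: int_induct[where k = 0])
  case base
  then show ?case by simp
next
  case (step1 i)
  then show ?case by (metis sigma_pow_succ add.commute add.left_commute)
next
  case (step2 i)
  then show ?case by (metis sigma_pow_pred add_diff_eq diff_add_eq)
qed

lemma field_hom_sigma_pow: "field_hom (sigma_pow \<sigma> k)"
proof -
  have "sigma_pow \<sigma> k (x + y) = sigma_pow \<sigma> k x + sigma_pow \<sigma> k y
      \<and> sigma_pow \<sigma> k (x * y) = sigma_pow \<sigma> k x * sigma_pow \<sigma> k y
      \<and> sigma_pow \<sigma> k 1 = 1 \<and> sigma_pow \<sigma> k 0 = 0" for x y
    by (induction k rule: int_induct[where k = 0])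
      (simp_all add: sigma_pow_succ sigma_pow_pred aut.hom_add aut.hom_mult aut.inv.hom_add aut.inv.hom_mult)
  then show ?thesis by unfold_locales auto
qed

context
  fixes k :: int
begin

interpretation sigma_pow: field_hom "sigma_pow \<sigma> k"
  by (rule field_hom_sigma_pow)

lemmas sigma_pow_add = sigma_pow.hom_add
  and sigma_pow_mult = sigma_pow.hom_mult
  and sigma_pow_zero [simp] = sigma_pow.hom_zero
  and sigma_pow_one [simp] = sigma_pow.hom_one
  and sigma_pow_divide = sigma_pow.hom_div
  and sigma_pow_sum = sigma_pow.hom_sum

end

lemma ore_mult_support:
  assumes "finite S1" and "{i. L1 i \<noteq> 0} \<subseteq> S1" and "{i. L2 i \<noteq> 0} \<subseteq> S2"
  shows "{k. ore_mult \<sigma> L1 L2 k \<noteq> 0} \<subseteq> (\<lambda>(i, j). i + j) ` (S1 \<times> S2)"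
proof (rule subsetI, rule ccontr)
  fix k
  assume k: "k \<in> {k. ore_mult \<sigma> L1 L2 k \<noteq> 0}" and nk: "k \<notin> (\<lambda>(i, j). i + j) ` (S1 \<times> S2)"
  have "L2 (k - i) = 0" if i: "i \<in> S1" for i
  proof (rule ccontr)
    assume "L2 (k - i) \<noteq> 0"
    then have "k - i \<in> S2" using assms(3) by auto
    then have "k \<in> (\<lambda>(i, j). i + j) ` (S1 \<times> S2)"
      using i by (auto intro!: image_eqI[of _ _ "(i, k - i)"])
    with nk show False by simp
  qed
  then have "ore_mult \<sigma> L1 L2 k = 0" by (simp add: ore_mult_eq_sum[OF assms(1,2)])
  with k show False by simp
qed

lemma op_apply_ore_mult:
  assumes f1: "finite S1" and s1: "{i. L1 i \<noteq> 0} \<subseteq> S1"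
    and f2: "finite S2" and s2: "{i. L2 i \<noteq> 0} \<subseteq> S2"
  shows "op_apply \<sigma> (ore_mult \<sigma> L1 L2) y = op_apply \<sigma> L1 (op_apply \<sigma> L2 y)"
proof -
  define S3 where "S3 = (\<lambda>(i, j). i + j) ` (S1 \<times> S2)"
  have f3: "finite S3" unfolding S3_def using f1 f2 by simp
  have inner: "(\<Sum>k\<in>S3. sigma_pow \<sigma> i (L2 (k - i)) * sigma_pow \<sigma> k y)
      = (\<Sum>j\<in>S2. sigma_pow \<sigma> i (L2 j) * sigma_pow \<sigma> (i + j) y)" if i: "i \<in> S1" for i
  proof -
    have "(\<Sum>k\<in>S3. sigma_pow \<sigma> i (L2 (k - i)) * sigma_pow \<sigma> k y)
        = (\<Sum>k\<in>(+) i ` S2. sigma_pow \<sigma> i (L2 (k - i)) * sigma_pow \<sigma> k y)"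
    proof (rule sum.mono_neutral_right[OF f3])
      show "(+) i ` S2 \<subseteq> S3" unfolding S3_def using i by auto
      show "\<forall>k\<in>S3 - (+) i ` S2. sigma_pow \<sigma> i (L2 (k - i)) * sigma_pow \<sigma> k y = 0"
      proof
        fix k assume "k \<in> S3 - (+) i ` S2"
        then have "k - i \<notin> S2" by force
        then have "L2 (k - i) = 0" using s2 by auto
        then show "sigma_pow \<sigma> i (L2 (k - i)) * sigma_pow \<sigma> k y = 0" by simp
      qed
    qed
    also have "\<dots> = (\<Sum>j\<in>S2. sigma_pow \<sigma> i (L2 j) * sigma_pow \<sigma> (i + j) y)"
      by (subst sum.reindex) auto
    finally show ?thesis .
  qed
  have "op_apply \<sigma> (ore_mult \<sigma> L1 L2) y = (\<Sum>k\<in>S3. ore_mult \<sigma> L1 L2 k * sigma_pow \<sigma> k y)"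
    using ore_mult_support[OF f1 s1 s2] by (intro op_apply_eq_sum[OF f3]) (simp add: S3_def)
  also have "\<dots> = (\<Sum>i\<in>S1. L1 i * (\<Sum>k\<in>S3. sigma_pow \<sigma> i (L2 (k - i)) * sigma_pow \<sigma> k y))"
    unfolding ore_mult_eq_sum[OF f1 s1] sum_distrib_right sum_distrib_left
    by (subst sum.swap) (simp add: mult.assoc)
  also have "\<dots> = (\<Sum>i\<in>S1. L1 i * sigma_pow \<sigma> i (\<Sum>j\<in>S2. L2 j * sigma_pow \<sigma> j y))"
    by (simp add: inner sigma_pow_sum sigma_pow_mult)
  also have "\<dots> = op_apply \<sigma> L1 (op_apply \<sigma> L2 y)"
    by (simp add: op_apply_eq_sum[OF f1 s1] op_apply_eq_sum[OF f2 s2])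
  finally show ?thesis .
qed

lemma op_apply_sum: "op_apply \<sigma> L (sum f A) = (\<Sum>a\<in>A. op_apply \<sigma> L (f a))"
  unfolding op_apply_def sigma_pow_sum sum_distrib_left by (rule sum.swap)

lemma omat_apply_omat_mult:
  assumes fP: "finite_omat n P" and fQ: "finite_omat n Q" and r: "r < n"
  shows "omat_apply \<sigma> n (omat_mult \<sigma> n P Q) y r = omat_apply \<sigma> n P (omat_apply \<sigma> n Q y) r"
proof -
  define SP where "SP = (\<Union>r<n. \<Union>c<n. {k. P r c k \<noteq> 0})"
  define SQ where "SQ = (\<Union>r<n. \<Union>c<n. {k. Q r c k \<noteq> 0})"
  have fin: "finite SP" "finite SQ"
    using fP fQ by (auto simp: SP_def SQ_def finite_omat_def)
  have supp: "{k. P r' c k \<noteq> 0} \<subseteq> SP" "{k. Q r' c k \<noteq> 0} \<subseteq> SQ" if "r' < n" "c < n" for r' c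
    using that by (auto simp: SP_def SQ_def)
  have "omat_apply \<sigma> n (omat_mult \<sigma> n P Q) y r
      = (\<Sum>c<n. \<Sum>l<n. op_apply \<sigma> (ore_mult \<sigma> (P r l) (Q l c)) (y c))"
    unfolding omat_apply_def omat_mult_def
  proof (rule sum.cong[OF refl])
    fix c assume "c \<in> {..<n}"
    then have "{i. ore_mult \<sigma> (P r l) (Q l c) i \<noteq> 0} \<subseteq> (\<lambda>(i, j). i + j) ` (SP \<times> SQ)" if "l < n" for l
      using that r by (intro ore_mult_support[OF fin(1)] supp) auto
    then show "op_apply \<sigma> (\<lambda>k. \<Sum>l<n. ore_mult \<sigma> (P r l) (Q l c) k) (y c)
        = (\<Sum>l<n. op_apply \<sigma> (ore_mult \<sigma> (P r l) (Q l c)) (y c))"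
      using fin by (intro op_apply_sum_operators[where S = "(\<lambda>(i, j). i + j) ` (SP \<times> SQ)"]) auto
  qed
  also have "\<dots> = (\<Sum>l<n. \<Sum>c<n. op_apply \<sigma> (P r l) (op_apply \<sigma> (Q l c) (y c)))"
  proof (subst sum.swap, intro sum.cong refl)
    fix l c assume "l \<in> {..<n}" "c \<in> {..<n}"
    then show "op_apply \<sigma> (ore_mult \<sigma> (P r l) (Q l c)) (y c) = op_apply \<sigma> (P r l) (op_apply \<sigma> (Q l c) (y c))"
      using r by (intro op_apply_ore_mult[OF fin(1) _ fin(2)] supp) auto
  qed
  also have "\<dots> = omat_apply \<sigma> n P (omat_apply \<sigma> n Q y) r"
    unfolding omat_apply_def op_apply_sum ..
  finally show ?thesis .
qed

lemma omat_apply_product_system: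
  assumes "finite_omat n P" and "finite_omat n Q" and "r < n"
    and "\<And>r c. r < n \<Longrightarrow> c < n \<Longrightarrow> omat_mult \<sigma> n P Q r c = R r c"
    and "\<And>c. c < n \<Longrightarrow> omat_apply \<sigma> n Q y c = x c"
  shows "omat_apply \<sigma> n R y r = omat_apply \<sigma> n P x r"
proof -
  have "omat_apply \<sigma> n R y r = omat_apply \<sigma> n (omat_mult \<sigma> n P Q) y r"
    using assms(4) \<open>r < n\<close> by (intro omat_apply_cong) auto
  also have "\<dots> = omat_apply \<sigma> n P (omat_apply \<sigma> n Q y) r"
    by (rule omat_apply_omat_mult[OF assms(1-3)])
  also have "\<dots> = omat_apply \<sigma> n P x r"
    using assms(5) by (intro omat_apply_cong) auto
  finally show ?thesis .
qed

end

section \<open>The shift on polynomials of a \<open>\<Pi>\<Sigma>\<close>-extension\<close>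

locale PiSigma_extension =
  fixes \<sigma> :: "'a::{field_gcd,field_char_0} poly fract \<Rightarrow> 'a poly fract"
  assumes PiSigma: "PiSigma_ext \<sigma>"
begin

sublocale difference_field \<sigma>
  using PiSigma by unfold_locales (simp add: PiSigma_ext_def)

lemma sigma_constF: "x \<in> constF \<Longrightarrow> \<sigma> x \<in> constF"
  using PiSigma by (auto simp: PiSigma_ext_def)

lemma inv_sigma_constF:
  assumes "x \<in> constF"
  shows "inv_into UNIV \<sigma> x \<in> constF"
proof -
  have "x \<in> \<sigma> ` constF" using PiSigma assms by (simp add: PiSigma_ext_def)
  then show ?thesis by auto
qed

lemma sigma_pow_constF: "x \<in> constF \<Longrightarrow> sigma_pow \<sigma> k x \<in> constF"
  by (induction k rule: int_induct[where k = 0])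
    (simp_all add: sigma_pow_succ sigma_pow_pred sigma_constF inv_sigma_constF)

lemma fixed_point_constF: "\<sigma> x = x \<Longrightarrow> x \<in> constF"
  using PiSigma by (auto simp: PiSigma_ext_def)

lemma Sigma_or_Pi: "Sigma_monomial \<sigma> \<or> Pi_monomial \<sigma>"
  using PiSigma by (simp add: PiSigma_ext_def)

lemma sigma_Tvar:
  obtains a b where "a \<noteq> 0" and "\<sigma> Tvar = pf [:b, a:]"
  using Sigma_or_Pi
proof
  assume "Sigma_monomial \<sigma>"
  then obtain \<beta> where "\<sigma> Tvar = Tvar + pf [:\<beta>:]" by (auto simp: Sigma_monomial_def)
  then have "\<sigma> Tvar = pf [:\<beta>, 1:]" by (simp add: pf_monic_linear)
  then show ?thesis by (rule that[rotated]) simp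
next
  assume "Pi_monomial \<sigma>"
  then obtain \<alpha> where "\<alpha> \<noteq> 0" "\<sigma> Tvar = pf [:\<alpha>:] * Tvar" by (auto simp: Pi_monomial_def)
  moreover have "pf [:0, \<alpha>:] = pf [:\<alpha>:] * Tvar" by (simp add: pf_linear)
  ultimately show ?thesis using that by metis
qed

lemma inv_sigma_Tvar: "inv_into UNIV \<sigma> Tvar \<in> range pf"
proof -
  obtain a b where a: "a \<noteq> 0" and ab: "\<sigma> Tvar = pf [:b, a:]" by (rule sigma_Tvar)
  have "\<exists>c'. \<sigma> (pf [:c':]) = pf [:c:]" for c
  proof -
    obtain c' where "inv_into UNIV \<sigma> (pf [:c:]) = pf [:c':]"
      using inv_sigma_constF[OF const_in_constF[of c]] unfolding constF_def by blast
    then show ?thesis by (metis sigma_inv)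
  qed
  then obtain a' b' where a': "\<sigma> (pf [:a':]) = pf [:a:]" and b': "\<sigma> (pf [:b':]) = pf [:b:]"
    by metis
  have "a' \<noteq> 0"
  proof
    assume "a' = 0"
    then have "pf [:a:] = 0" using a' by simp
    with a show False by simp
  qed
  then have "[:a':] * [:inverse a':] = 1"
    by (simp add: pCons_one)
  then have inv: "pf [:a':] * pf [:inverse a':] = 1"
    by (metis pf_1 pf_mult)
  define x where "x = (Tvar - pf [:b':]) * pf [:inverse a':]"
  have "x = pf (([:0, 1:] - [:b':]) * [:inverse a':])"
    by (simp only: x_def Tvar_def pf_mult pf.hom_minus)
  moreover have "pf [:a':] * x = (Tvar - pf [:b':]) * (pf [:a':] * pf [:inverse a':])"
    unfolding x_def by (simp only: ac_simps)
  then have "pf [:a':] * x = Tvar - pf [:b':]"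
    by (simp only: inv mult_1_right)
  then have "\<sigma> (pf [:a':]) * \<sigma> x = \<sigma> Tvar - \<sigma> (pf [:b':])"
    by (metis aut.hom_minus aut.hom_mult)
  then have "pf [:a:] * \<sigma> x = pf [:a:] * Tvar"
    by (simp add: a' b' ab pf_linear)
  then have "\<sigma> x = Tvar" using a by simp
  ultimately show ?thesis by (metis inv_sigma rangeI)
qed

lemma sigma_Tvar_range_pf: "\<sigma> Tvar \<in> range pf"
proof -
  obtain a b where "\<sigma> Tvar = pf [:b, a:]" by (rule sigma_Tvar)
  then show ?thesis by (simp add: rangeI)
qed

lemma sigma_pow_range_pf: "sigma_pow \<sigma> k (pf p) \<in> range pf"
proof (induction k arbitrary: p rule: int_induct[where k = 0])
  case base
  then show ?case by simp
next
  case (step1 i)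
  then obtain q where "sigma_pow \<sigma> i (pf p) = pf q" by blast
  moreover have "\<sigma> (pf q) \<in> range pf"
  proof (rule comm_ring_hom_range_pf[OF aut.comm_ring_hom_axioms _ sigma_Tvar_range_pf])
    show "\<sigma> (pf [:c:]) \<in> range pf" for c
      using sigma_constF[OF const_in_constF] by (auto simp: constF_def)
  qed
  ultimately show ?case by (simp add: sigma_pow_succ)
next
  case (step2 i)
  then obtain q where "sigma_pow \<sigma> i (pf p) = pf q" by blast
  moreover have "inv_into UNIV \<sigma> (pf q) \<in> range pf"
  proof (rule comm_ring_hom_range_pf[OF aut.inv.comm_ring_hom_axioms _ inv_sigma_Tvar])
    show "inv_into UNIV \<sigma> (pf [:c:]) \<in> range pf" for c
      using inv_sigma_constF[OF const_in_constF] by (auto simp: constF_def)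
  qed
  ultimately show ?case by (simp add: sigma_pow_pred)
qed

lemma pf_sig_poly [simp]: "pf (sig_poly \<sigma> k p) = sigma_pow \<sigma> k (pf p)"
proof -
  obtain q where "sigma_pow \<sigma> k (pf p) = pf q" using sigma_pow_range_pf by blast
  then show ?thesis by (simp add: sig_poly_def)
qed

lemma sigma_pf: "\<sigma> (pf p) = pf (sig_poly \<sigma> 1 p)"
  by (simp add: sigma_pow_1)

lemma sig_poly_sig_poly [simp]: "sig_poly \<sigma> a (sig_poly \<sigma> b p) = sig_poly \<sigma> (a + b) p"
  by (subst pf_eq_iff[symmetric]) simp

lemma sig_poly_0 [simp]: "sig_poly \<sigma> 0 p = p"
  by (subst pf_eq_iff[symmetric]) simp

lemma idom_isom_sig_poly: "idom_isom (sig_poly \<sigma> k)"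
proof unfold_locales
  show "sig_poly \<sigma> k (x + y) = sig_poly \<sigma> k x + sig_poly \<sigma> k y" for x y
    by (subst pf_eq_iff[symmetric]) (simp add: sigma_pow_add)
  show "sig_poly \<sigma> k (x * y) = sig_poly \<sigma> k x * sig_poly \<sigma> k y" for x y
    by (subst pf_eq_iff[symmetric]) (simp add: sigma_pow_mult)
  show "sig_poly \<sigma> k 1 = 1" and "sig_poly \<sigma> k 0 = 0"
    by (subst pf_eq_iff[symmetric], simp)+
  show "x = 0" if "sig_poly \<sigma> k x = 0" for x
  proof -
    have "pf x = sigma_pow \<sigma> (- k) (pf (sig_poly \<sigma> k x))" by simp
    then show ?thesis using that by simp
  qed
  show "surj (sig_poly \<sigma> k)"
    by (rule surjI[of _ "sig_poly \<sigma> (- k)"]) simp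
qed

context
  fixes k :: int
begin

interpretation sig: idom_isom "sig_poly \<sigma> k"
  by (rule idom_isom_sig_poly)

lemmas sig_poly_add = sig.hom_add
  and sig_poly_power = sig.hom_power
  and sig_poly_mult = sig.hom_mult
  and sig_poly_1 [simp] = sig.hom_one
  and sig_poly_prod = sig.hom_prod
  and sig_poly_eq_0_iff [simp] = sig.hom_0_iff
  and sig_poly_dvd_sig_poly_iff [simp] = sig.hom_dvd_hom

end

lemma sig_poly_dvd_iff: "sig_poly \<sigma> k a dvd b \<longleftrightarrow> a dvd sig_poly \<sigma> (- k) b"
  using sig_poly_dvd_sig_poly_iff[of k a "sig_poly \<sigma> (- k) b"] by simp

lemma prime_elem_sig_poly:
  assumes "prime_elem f"
  shows "prime_elem (sig_poly \<sigma> k f)"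
  unfolding prime_elem_def
proof (intro conjI allI impI)
  show "sig_poly \<sigma> k f \<noteq> 0" and "\<not> is_unit (sig_poly \<sigma> k f)"
    using assms sig_poly_dvd_sig_poly_iff[of k f 1] by (auto simp: prime_elem_def)
  show "sig_poly \<sigma> k f dvd a \<or> sig_poly \<sigma> k f dvd b" if "sig_poly \<sigma> k f dvd a * b" for a b
    using that assms by (simp add: sig_poly_dvd_iff sig_poly_mult prime_elem_dvd_mult_iff)
qed

lemma sig_poly_const: "\<exists>c'. sig_poly \<sigma> k [:c:] = [:c':]"
proof -
  obtain c' where "sigma_pow \<sigma> k (pf [:c:]) = pf [:c':]"
    using sigma_pow_constF[OF const_in_constF] by (auto simp: constF_def)
  then have "pf (sig_poly \<sigma> k [:c:]) = pf [:c':]" by simp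
  then show ?thesis by (simp only: pf_eq_iff) blast
qed

lemma pf_sig_poly_t: "pf (sig_poly \<sigma> 1 [:0, 1:]) = \<sigma> Tvar"
  by (simp add: sigma_pow_1 Tvar_def)

lemma sig_poly_t_Sigma:
  assumes "Sigma_monomial \<sigma>"
  obtains \<beta> where "sig_poly \<sigma> 1 [:0, 1:] = [:\<beta>, 1:]"
proof -
  obtain \<beta> where "\<sigma> Tvar = Tvar + pf [:\<beta>:]" using assms by (auto simp: Sigma_monomial_def)
  then have "pf (sig_poly \<sigma> 1 [:0, 1:]) = pf [:\<beta>, 1:]"
    by (simp only: pf_sig_poly_t pf_monic_linear)
  then show ?thesis using that by (simp only: pf_eq_iff)
qed

lemma sig_poly_t_Pi:
  assumes "Pi_monomial \<sigma>"
  obtains \<alpha> where "\<alpha> \<noteq> 0" and "sig_poly \<sigma> 1 [:0, 1:] = [:0, \<alpha>:]"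
proof -
  obtain \<alpha> where "\<alpha> \<noteq> 0" and "\<sigma> Tvar = pf [:\<alpha>:] * Tvar" using assms by (auto simp: Pi_monomial_def)
  moreover from this have "pf (sig_poly \<sigma> 1 [:0, 1:]) = pf [:0, \<alpha>:]"
    by (simp only: pf_sig_poly_t pf_linear pCons_0_0 pf_0 add_0)
  ultimately show ?thesis using that by (simp only: pf_eq_iff)
qed

lemma sig_poly_t_power:
  assumes "sig_poly \<sigma> 1 [:0, 1:] = [:0, \<alpha>:]"
  shows "sig_poly \<sigma> 1 ([:0, 1:] ^ m) = Polynomial.smult (\<alpha> ^ m) ([:0, 1:] ^ m)"
proof -
  have "sig_poly \<sigma> 1 ([:0, 1:] ^ m) = (Polynomial.smult \<alpha> [:0, 1:]) ^ m"
    using assms by (simp add: sig_poly_power)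
  then show ?thesis by (simp only: smult_power)
qed

lemma degree_sig_poly_t: "degree (sig_poly \<sigma> 1 [:0, 1:]) = 1"
proof (cases "Sigma_monomial \<sigma>")
  case True
  then obtain \<beta> where "sig_poly \<sigma> 1 [:0, 1:] = [:\<beta>, 1:]" by (rule sig_poly_t_Sigma)
  then show ?thesis by simp
next
  case False
  then have "Pi_monomial \<sigma>" using Sigma_or_Pi by blast
  then obtain \<alpha> where "\<alpha> \<noteq> 0" and "sig_poly \<sigma> 1 [:0, 1:] = [:0, \<alpha>:]" by (rule sig_poly_t_Pi)
  then show ?thesis by simp
qed

lemma degree_lead_coeff_sig_poly_1:
  assumes "p \<noteq> 0"
  shows "degree (sig_poly \<sigma> 1 p) = degree p \<and>
    lead_coeff (sig_poly \<sigma> 1 p)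
      = lead_coeff (sig_poly \<sigma> 1 [:lead_coeff p:]) * lead_coeff (sig_poly \<sigma> 1 [:0, 1:]) ^ degree p"
  using assms
proof (induction p)
  case 0
  then show ?case by simp
next
  case (pCons a p)
  obtain c where c: "sig_poly \<sigma> 1 [:a:] = [:c:]" using sig_poly_const by blast
  show ?case
  proof (cases "p = 0")
    case True
    then show ?thesis using c by simp
  next
    case False
    let ?T = "sig_poly \<sigma> 1 [:0, 1:]" and ?q = "sig_poly \<sigma> 1 p"
    have q: "degree ?q = degree p"
      "lead_coeff ?q = lead_coeff (sig_poly \<sigma> 1 [:lead_coeff p:]) * lead_coeff ?T ^ degree p"
      using pCons.IH False by auto
    have "?T \<noteq> 0" using degree_sig_poly_t by auto
    then have dTq: "degree (?T * ?q) = Suc (degree p)"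
      using False q by (simp add: degree_mult_eq degree_sig_poly_t)
    have e: "sig_poly \<sigma> 1 (pCons a p) = [:c:] + ?T * ?q"
      by (subst pCons_eq_const_plus_t_mult[of a p]) (simp only: sig_poly_add sig_poly_mult c)
    have "degree ([:c:] + ?T * ?q) = degree (?T * ?q)"
      using dTq by (simp add: degree_add_eq_right)
    moreover have "lead_coeff ([:c:] + ?T * ?q) = lead_coeff (?T * ?q)"
      using dTq by (intro lead_coeff_add_le) simp
    moreover have "lead_coeff (?T * ?q) = lead_coeff ?T * lead_coeff ?q"
      by (rule lead_coeff_mult)
    ultimately show ?thesis
      using e dTq False q by (simp add: mult_ac)
  qed
qed

lemma eigenvectors_proportional:
  assumes "\<sigma> x = u * x" and "\<sigma> y = u * y" and "y \<noteq> 0"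
  obtains c where "x = pf [:c:] * y"
proof -
  have "u \<noteq> 0" using assms(2,3) by (metis aut.hom_0_iff mult_zero_left)
  then have "\<sigma> (x / y) = x / y" using assms by (simp add: aut.hom_div)
  then have "x / y \<in> constF" by (rule fixed_point_constF)
  then obtain c where "x / y = pf [:c:]" by (auto simp: constF_def)
  then show ?thesis using that assms(3) by (simp add: field_simps)
qed

lemma monic_semi_invariant_factor:
  assumes "g \<noteq> 0" and "lead_coeff g = 1" and sg: "sig_poly \<sigma> 1 g = Polynomial.smult w g"
  shows "w = lead_coeff (sig_poly \<sigma> 1 [:0, 1:]) ^ degree g"
proof -
  have "lead_coeff (sig_poly \<sigma> 1 g)
      = lead_coeff (sig_poly \<sigma> 1 [:lead_coeff g:]) * lead_coeff (sig_poly \<sigma> 1 [:0, 1:]) ^ degree g"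
    using degree_lead_coeff_sig_poly_1[OF \<open>g \<noteq> 0\<close>] by (rule conjunct2)
  also have "sig_poly \<sigma> 1 [:lead_coeff g:] = 1"
    by (simp add: assms(2) pCons_one)
  finally show ?thesis
    using sg assms(2) by (cases "w = 0") auto
qed

text \<open>Karr's theorem on semi-invariant polynomials.\<close>

lemma semi_invariant_poly:
  assumes h0: "h \<noteq> 0" and hd: "degree h \<noteq> 0" and hs: "sig_poly \<sigma> 1 h = Polynomial.smult u h"
  shows "Pi_monomial \<sigma> \<and> (\<exists>c. h = Polynomial.smult c ([:0, 1:] ^ degree h))"
proof -
  define L where "L = lead_coeff h"
  define g where "g = Polynomial.smult (inverse L) h"
  have L0: "L \<noteq> 0" using h0 by (simp add: L_def)
  have g0: "g \<noteq> 0" and dg: "degree g = degree h" and lg: "lead_coeff g = 1" and hg: "h = Polynomial.smult L g"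
    using h0 L0 by (simp_all add: g_def L_def)
  obtain c1 where c1: "sig_poly \<sigma> 1 [:inverse L:] = [:c1:]" using sig_poly_const by blast
  define w where "w = c1 * u * L"
  have "sig_poly \<sigma> 1 g = sig_poly \<sigma> 1 ([:inverse L:] * h)" by (simp add: g_def)
  also have "\<dots> = Polynomial.smult (c1 * u) h" by (simp only: sig_poly_mult c1 hs) (simp add: mult.commute)
  also have "\<dots> = Polynomial.smult w g" by (simp add: hg w_def mult_ac)
  finally have sg: "sig_poly \<sigma> 1 g = Polynomial.smult w g" .
  then have w: "w = lead_coeff (sig_poly \<sigma> 1 [:0, 1:]) ^ degree h"
    using monic_semi_invariant_factor[OF g0 lg] dg by simp
  have \<sigma>g: "\<sigma> (pf g) = pf [:w:] * pf g"
    by (simp add: sigma_pf sg flip: pf_mult)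
  from Sigma_or_Pi show ?thesis
  proof
    assume "Sigma_monomial \<sigma>"
    then obtain \<beta> where "sig_poly \<sigma> 1 [:0, 1:] = [:\<beta>, 1:]" by (rule sig_poly_t_Sigma)
    then have "\<sigma> (pf g) = pf g" using \<sigma>g w by simp
    then have "pf g \<in> constF" by (rule fixed_point_constF)
    then obtain c where "g = [:c:]" by (auto simp: constF_def)
    then show ?thesis using dg hd by simp
  next
    assume P: "Pi_monomial \<sigma>"
    then obtain \<alpha> where \<alpha>0: "\<alpha> \<noteq> 0" and \<alpha>: "sig_poly \<sigma> 1 [:0, 1:] = [:0, \<alpha>:]" by (rule sig_poly_t_Pi)
    let ?t = "[:0, 1:] ^ degree h"
    have "\<sigma> (pf ?t) = pf [:w:] * pf ?t"
      using \<alpha>0 w by (simp add: sigma_pf sig_poly_t_power[OF \<alpha>] \<alpha> flip: pf_mult)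
    moreover have "pf ?t \<noteq> 0" by simp
    ultimately obtain c where "pf g = pf [:c:] * pf ?t"
      by (rule eigenvectors_proportional[OF \<sigma>g])
    then have "g = Polynomial.smult c ?t" by (simp flip: pf_mult)
    then have "h = Polynomial.smult (L * c) ?t" using hg by (metis smult_smult)
    then show ?thesis using P by blast
  qed
qed

subsection \<open>Aperiodic irreducible factors\<close>

definition t_factor :: "'a poly \<Rightarrow> bool" where
  "t_factor f \<longleftrightarrow> Pi_monomial \<sigma> \<and> f dvd [:0, 1:]"

lemma Pi_sig_poly_t_associated:
  assumes "Pi_monomial \<sigma>"
  shows "[:0, 1:] dvd sig_poly \<sigma> k [:0, 1:] \<and> sig_poly \<sigma> k [:0, 1:] dvd [:0, 1:]"
proof -
  obtain \<alpha> where \<alpha>0: "\<alpha> \<noteq> 0" and \<alpha>: "sig_poly \<sigma> 1 [:0, 1:] = [:0, \<alpha>:]"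
    using assms by (rule sig_poly_t_Pi)
  have t1: "[:0, 1:] dvd sig_poly \<sigma> 1 [:0, 1:]"
    unfolding \<alpha> by (rule dvdI[of _ _ "[:\<alpha>:]"]) simp
  have t2: "sig_poly \<sigma> 1 [:0, 1:] dvd [:0, 1:]"
    unfolding \<alpha> by (rule dvdI[of _ _ "[:inverse \<alpha>:]"]) (simp add: \<alpha>0)
  show ?thesis
  proof (induction k rule: int_induct[where k = 0])
    case base
    then show ?case by simp
  next
    case (step1 i)
    have "sig_poly \<sigma> 1 [:0, 1:] dvd sig_poly \<sigma> 1 (sig_poly \<sigma> i [:0, 1:])"
      and "sig_poly \<sigma> 1 (sig_poly \<sigma> i [:0, 1:]) dvd sig_poly \<sigma> 1 [:0, 1:]"
      using step1 by (simp_all only: sig_poly_dvd_sig_poly_iff)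
    then show ?case
      using t1 t2 by (auto simp: add.commute intro: dvd_trans)
  next
    case (step2 i)
    have "sig_poly \<sigma> 1 [:0, 1:] dvd sig_poly \<sigma> 1 (sig_poly \<sigma> (i - 1) [:0, 1:])"
      using dvd_trans[OF t2 step2(2)[THEN conjunct1]] by simp
    moreover have "sig_poly \<sigma> 1 (sig_poly \<sigma> (i - 1) [:0, 1:]) dvd sig_poly \<sigma> 1 [:0, 1:]"
      using dvd_trans[OF step2(2)[THEN conjunct2] t1] by simp
    ultimately show ?case by (simp only: sig_poly_dvd_sig_poly_iff simp_thms)
  qed
qed

lemma not_t_factor_sig_poly:
  assumes "\<not> t_factor f"
  shows "\<not> t_factor (sig_poly \<sigma> k f)"
proof
  assume "t_factor (sig_poly \<sigma> k f)"
  then have P: "Pi_monomial \<sigma>" and "f dvd sig_poly \<sigma> (- k) [:0, 1:]"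
    by (auto simp: t_factor_def sig_poly_dvd_iff)
  then have "f dvd [:0, 1:]"
    using Pi_sig_poly_t_associated[OF P, of "- k"] dvd_trans by blast
  with assms P show False by (simp add: t_factor_def)
qed

lemma associated_shift_semi_invariant:
  assumes f0: "f \<noteq> 0" and d1: "sig_poly \<sigma> (int n) f dvd f" and d2: "f dvd sig_poly \<sigma> (int n) f"
  obtains u where "sig_poly \<sigma> 1 (\<Prod>i<n. sig_poly \<sigma> (int i) f) = Polynomial.smult u (\<Prod>i<n. sig_poly \<sigma> (int i) f)"
proof -
  define h where "h = (\<Prod>i<n. sig_poly \<sigma> (int i) f)"
  obtain r where r: "sig_poly \<sigma> (int n) f = f * r" using d2 by (auto elim: dvdE)
  have "f * r dvd f * 1" using d1 r by simp
  then have "is_unit r" using f0 by simp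
  then obtain u where "r = [:u:]" using is_unit_poly_iff by blast
  then have sn: "sig_poly \<sigma> (int n) f = Polynomial.smult u f" using r by simp
  have "h * sig_poly \<sigma> (int n) f = (\<Prod>i<Suc n. sig_poly \<sigma> (int i) f)"
    by (simp add: h_def)
  also have "\<dots> = f * (\<Prod>i<n. sig_poly \<sigma> (int (Suc i)) f)"
    by (subst prod.lessThan_Suc_shift) simp
  also have "\<dots> = f * sig_poly \<sigma> 1 h"
    by (simp add: h_def sig_poly_prod add.commute)
  finally have "f * sig_poly \<sigma> 1 h = f * Polynomial.smult u h" using sn by (simp add: mult_ac)
  then have "sig_poly \<sigma> 1 h = Polynomial.smult u h" using f0 by (metis mult_cancel_left)
  then show ?thesis using that by (simp add: h_def)
qed

lemma associated_positive_shift_t_factor: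
  assumes pf: "prime_elem f" and n0: "n > 0"
    and d1: "sig_poly \<sigma> (int n) f dvd f" and d2: "f dvd sig_poly \<sigma> (int n) f"
  shows "t_factor f"
proof -
  have f0: "f \<noteq> 0" and fu: "\<not> is_unit f" using pf by (auto simp: prime_elem_def)
  define h where "h = (\<Prod>i<n. sig_poly \<sigma> (int i) f)"
  obtain u where hs: "sig_poly \<sigma> 1 h = Polynomial.smult u h"
    using associated_shift_semi_invariant[OF f0 d1 d2] by (auto simp: h_def)
  have h0: "h \<noteq> 0" using f0 by (simp add: h_def)
  have "sig_poly \<sigma> (int 0) f dvd h" unfolding h_def using n0 by (intro dvd_prodI) auto
  then have "f dvd h" by simp
  have "degree f \<noteq> 0" using f0 fu is_unit_iff_degree by blast
  moreover have "degree f \<le> degree h" using \<open>f dvd h\<close> h0 by (rule dvd_imp_degree_le)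
  ultimately have "degree h \<noteq> 0" by simp
  then obtain c where P: "Pi_monomial \<sigma>" and hc: "h = Polynomial.smult c ([:0, 1:] ^ degree h)"
    using semi_invariant_poly[OF h0 _ hs] by blast
  have "c \<noteq> 0" using h0 hc by (metis smult_0_left)
  moreover have "f dvd Polynomial.smult c ([:0, 1:] ^ degree h)" using \<open>f dvd h\<close> hc by simp
  ultimately have "f dvd [:0, 1:] ^ degree h" by (simp add: dvd_smult_cancel)
  then have "f dvd [:0, 1:]" using pf prime_elem_dvd_power by blast
  with P show ?thesis by (simp add: t_factor_def)
qed

lemma associated_shift_eq_0:
  assumes pf: "prime_elem f" and nt: "\<not> t_factor f"
    and d1: "sig_poly \<sigma> j f dvd f" and d2: "f dvd sig_poly \<sigma> j f"
  shows "j = 0"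
proof (rule ccontr)
  assume "j \<noteq> 0"
  define n where "n = nat \<bar>j\<bar>"
  have n0: "n > 0" using \<open>j \<noteq> 0\<close> by (simp add: n_def)
  have "j = int n \<or> j = - int n" by (auto simp: n_def)
  then have "sig_poly \<sigma> (int n) f dvd f \<and> f dvd sig_poly \<sigma> (int n) f"
    using d1 d2 by (auto simp: sig_poly_dvd_iff)
  then show False using associated_positive_shift_t_factor[OF pf n0] nt by blast
qed

lemma finite_shifts_dvd:
  assumes d0: "d \<noteq> 0" and pf: "prime_elem f" and nt: "\<not> t_factor f"
  shows "finite {j. sig_poly \<sigma> j f dvd d}"
proof -
  let ?S = "{j. sig_poly \<sigma> j f dvd d}" and ?g = "\<lambda>j. normalize (sig_poly \<sigma> j f)"
  have "?g ` ?S \<subseteq> prime_factors d"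
    using d0 prime_elem_sig_poly[OF pf] by (auto simp: in_prime_factors_iff)
  then have "finite (?g ` ?S)" by (rule finite_subset) simp
  moreover have "inj_on ?g ?S"
  proof (rule inj_onI)
    fix i j assume "?g i = ?g j"
    then have "sig_poly \<sigma> i f dvd sig_poly \<sigma> j f" "sig_poly \<sigma> j f dvd sig_poly \<sigma> i f"
      by (auto simp: associated_iff_dvd)
    then have "sig_poly \<sigma> (i - j) f dvd f" "f dvd sig_poly \<sigma> (i - j) f"
      by (simp_all add: sig_poly_dvd_iff)
    then have "i - j = 0" by (rule associated_shift_eq_0[OF pf nt])
    then show "i = j" by simp
  qed
  ultimately show ?thesis using finite_imageD by blast
qed

text \<open>Replacing \<open>f\<close> by its lowest shift dividing \<open>d\<close> normalises the shifts dividing \<open>d\<close> to \<open>[0, K]\<close>.\<close>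

lemma extremal_shifts:
  assumes d0: "d \<noteq> 0" and pf: "prime_elem f" and nt: "\<not> t_factor f"
    and fd: "f dvd d" and fk: "sig_poly \<sigma> (int k) f dvd d"
  obtains g K where "prime_elem g" and "\<not> t_factor g" and "int k \<le> K"
    and "g dvd d" and "sig_poly \<sigma> K g dvd d" and "\<And>j. sig_poly \<sigma> j g dvd d \<Longrightarrow> 0 \<le> j \<and> j \<le> K"
proof -
  define S where "S = {j. sig_poly \<sigma> j f dvd d}"
  have fin: "finite S" unfolding S_def by (rule finite_shifts_dvd[OF d0 pf nt])
  have "0 \<in> S" and "int k \<in> S" using fd fk by (simp_all add: S_def)
  then have j0: "Min S \<in> S" "Min S \<le> 0" "Min S \<le> int k" and j1: "Max S \<in> S" "int k \<le> Max S"
    using fin by (auto intro: Min_in Max_in)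
  have "sig_poly \<sigma> j (sig_poly \<sigma> (Min S) f) dvd d \<longleftrightarrow> j + Min S \<in> S" for j
    by (simp add: S_def)
  moreover have "j + Min S \<in> S \<Longrightarrow> 0 \<le> j \<and> j \<le> Max S - Min S" for j
    using fin by (auto dest: Min_le Max_ge)
  ultimately show ?thesis
    using j0 j1 that[of "sig_poly \<sigma> (Min S) f" "Max S - Min S"]
      prime_elem_sig_poly[OF pf] not_t_factor_sig_poly[OF nt]
    by (simp add: S_def)
qed

lemma per_dvd: "per \<sigma> x dvd x"
  using order_1[of 0 x] by (simp add: per_def)

lemma per_mult_ap: "per \<sigma> x * ap \<sigma> x = x"
  using per_dvd[of x] by (simp add: ap_def)

lemma ap_dvd: "ap \<sigma> x dvd x"
  by (metis per_mult_ap dvd_triv_right)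

lemma ap_eq_0_iff: "ap \<sigma> x = 0 \<longleftrightarrow> x = 0"
  by (metis per_mult_ap mult_zero_right ap_def div_0)

lemma prime_dvd_ap:
  assumes pg: "prime_elem g" and nt: "\<not> t_factor g" and gx: "g dvd x"
  shows "g dvd ap \<sigma> x"
proof -
  have "\<not> g dvd per \<sigma> x"
  proof
    assume gp: "g dvd per \<sigma> x"
    show False
    proof (cases "Pi_monomial \<sigma>")
      case True
      then have "g dvd [:0, 1:]"
        using gp pg prime_elem_dvd_power by (auto simp: per_def)
      with nt True show False by (simp add: t_factor_def)
    next
      case False
      then show False using gp pg by (simp add: per_def prime_elem_def)
    qed
  qed
  moreover have "g dvd per \<sigma> x * ap \<sigma> x" using gx by (simp add: per_mult_ap)
  ultimately show ?thesis using pg by (simp add: prime_elem_dvd_mult_iff)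
qed

lemma prime_dvd_ap_not_t_factor:
  assumes pf: "prime_elem f" and fa: "f dvd ap \<sigma> x" and x0: "x \<noteq> 0"
  shows "\<not> t_factor f"
proof
  assume "t_factor f"
  then have P: "Pi_monomial \<sigma>" and "[:0, 1:] dvd ap \<sigma> x"
    using prime_dvd_t_imp_t_dvd[OF pf] fa dvd_trans by (auto simp: t_factor_def)
  from this(2) have "per \<sigma> x * [:0, 1:] dvd per \<sigma> x * ap \<sigma> x" by (rule mult_dvd_mono[OF dvd_refl])
  moreover have "per \<sigma> x * [:0, 1:] = [:- 0, 1:] ^ Suc (order 0 x)"
    by (simp only: P per_def if_True power_Suc2 minus_zero)
  ultimately have "[:- 0, 1:] ^ Suc (order 0 x) dvd x"
    by (simp only: per_mult_ap)
  then show False using order_2[OF x0] by blast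
qed

subsection \<open>Denominators of solutions\<close>

lemma in_spread_iff:
  assumes "a \<noteq> 0"
  shows "k \<in> spread \<sigma> a b \<longleftrightarrow> (\<exists>h. prime_elem h \<and> h dvd a \<and> h dvd sig_poly \<sigma> (int k) b)"
proof -
  let ?G = "gcd a (sig_poly \<sigma> (int k) b)"
  have G0: "?G \<noteq> 0" using assms by (metis gcd_eq_0_iff)
  have "k \<in> spread \<sigma> a b \<longleftrightarrow> degree ?G \<noteq> 0" by (simp only: spread_def mem_Collect_eq)
  also have "\<dots> \<longleftrightarrow> \<not> is_unit ?G" by (simp only: is_unit_iff_degree[OF G0])
  also have "\<dots> \<longleftrightarrow> (\<exists>h. prime_elem h \<and> h dvd ?G)"
  proof
    assume "\<not> is_unit ?G"
    then obtain h where "h dvd ?G" and "prime h" using prime_divisor_exists[OF G0] by blast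
    then show "\<exists>h. prime_elem h \<and> h dvd ?G" by (blast intro: prime_imp_prime_elem)
  next
    assume "\<exists>h. prime_elem h \<and> h dvd ?G"
    then show "\<not> is_unit ?G" by (metis dvd_unit_imp_unit prime_elem_not_unit)
  qed
  finally show ?thesis by (simp only: gcd_greatest_iff)
qed

lemma disp_mono:
  assumes "\<And>k. k \<in> spread \<sigma> a b \<Longrightarrow> \<exists>K\<ge>k. K \<in> spread \<sigma> a' b'"
  shows "disp \<sigma> a b \<le> disp \<sigma> a' b'"
  unfolding disp_def
proof (rule Sup_mono)
  fix x assume "x \<in> (\<lambda>k. ereal (real k)) ` spread \<sigma> a b"
  then obtain k where "x = ereal (real k)" and "k \<in> spread \<sigma> a b" by blast
  with assms obtain K where "k \<le> K" and "K \<in> spread \<sigma> a' b'" by blast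
  moreover from \<open>k \<le> K\<close> have "x \<le> ereal (real K)" using \<open>x = ereal (real k)\<close> by simp
  ultimately show "\<exists>y\<in>(\<lambda>k. ereal (real k)) ` spread \<sigma> a' b'. x \<le> y" by blast
qed

lemma solution_denominator:
  fixes C :: "nat \<Rightarrow> nat \<Rightarrow> nat \<Rightarrow> 'a poly" and z :: "nat \<Rightarrow> 'a poly"
  assumes detC: "det (pmat n (C s)) \<noteq> 0" and sL: "s \<le> L"
    and \<mu>: "common_denom n (the (mat_inverse (map_mat pf (pmat n (C s))))) \<mu>"
    and d0: "d \<noteq> 0"
    and sol: "\<And>r. r < n \<Longrightarrow> omat_apply \<sigma> n (poly_omat L C) (\<lambda>c. pf (z c) / pf d) r \<in> range pf"
    and c: "c < n"
  shows "sig_poly \<sigma> (int s) d dvd \<mu> * (\<Prod>i\<in>{..L} - {s}. sig_poly \<sigma> (int i) d) * sig_poly \<sigma> (int s) (z c)"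
proof -
  define E where "E = (\<Prod>i\<in>{..L} - {s}. sig_poly \<sigma> (int i) d)"
  define Y where "Y i c = sigma_pow \<sigma> (int i) (pf (z c) / pf d)" for i c
  have Y: "pf (a * sig_poly \<sigma> (int i) (z c)) / pf (sig_poly \<sigma> (int i) d) = pf a * Y i c" for a i c
    by (simp add: Y_def sigma_pow_divide)
  have dvd_iff: "pf a * Y i c \<in> range pf \<longleftrightarrow> sig_poly \<sigma> (int i) d dvd a * sig_poly \<sigma> (int i) (z c)" for a i c
    using d0 by (simp only: flip: Y) (simp add: pf_div_in_range_iff del: pf_sig_poly pf_mult)
  have EY: "pf E * Y i c \<in> range pf" if "i \<in> {..L} - {s}" for i c
  proof -
    have "sig_poly \<sigma> (int i) d dvd E * sig_poly \<sigma> (int i) (z c)"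
      unfolding E_def using that by (intro dvd_mult2 dvd_prodI) auto
    then show ?thesis by (simp only: dvd_iff)
  qed
  have "(\<Sum>c'<n. pf (C s r c') * (pf E * Y s c')) \<in> range pf" if r: "r < n" for r
  proof -
    have "omat_apply \<sigma> n (poly_omat L C) (\<lambda>c. pf (z c) / pf d) r
        = (\<Sum>c'<n. pf (C s r c') * Y s c') + (\<Sum>c'<n. \<Sum>i\<in>{..L} - {s}. pf (C i r c') * Y i c')"
      using sL by (simp add: omat_apply_poly_omat Y_def sum.remove[of "{..L}" s] sum.distrib)
    then have "(\<Sum>c'<n. pf (C s r c') * (pf E * Y s c'))
        = pf E * omat_apply \<sigma> n (poly_omat L C) (\<lambda>c. pf (z c) / pf d) r
          - (\<Sum>c'<n. \<Sum>i\<in>{..L} - {s}. pf (C i r c') * (pf E * Y i c'))"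
      by (simp add: algebra_simps sum_distrib_left)
    also have "\<dots> \<in> range pf"
    proof (rule range_pf_diff)
      show "pf E * omat_apply \<sigma> n (poly_omat L C) (\<lambda>c. pf (z c) / pf d) r \<in> range pf"
        by (rule range_pf_mult[OF rangeI sol[OF r]])
      show "(\<Sum>c'<n. \<Sum>i\<in>{..L} - {s}. pf (C i r c') * (pf E * Y i c')) \<in> range pf"
        by (intro range_pf_sum range_pf_mult[OF rangeI] EY)
    qed
    finally show ?thesis .
  qed
  then have "pf \<mu> * (pf E * Y s c) \<in> range pf"
    by (rule common_denom_clears_solution[OF detC \<mu> _ c])
  then have "pf (\<mu> * E) * Y s c \<in> range pf" by (simp only: pf_mult mult.assoc)
  then show ?thesis by (simp only: dvd_iff E_def)
qed

lemma prime_dvd_denominator: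
  assumes pg: "prime_elem g" and red: "Gcd (insert d (z ` {..<n})) = 1"
    and gd: "g dvd sig_poly \<sigma> (int s) d"
    and gI: "\<And>i. i \<in> I \<Longrightarrow> \<not> g dvd sig_poly \<sigma> (int i) d" and fin: "finite I"
    and den: "\<And>c. c < n \<Longrightarrow>
      sig_poly \<sigma> (int s) d dvd \<mu> * (\<Prod>i\<in>I. sig_poly \<sigma> (int i) d) * sig_poly \<sigma> (int s) (z c)"
  shows "g dvd \<mu>"
proof -
  have "sig_poly \<sigma> (- int s) g dvd d" using gd by (simp add: sig_poly_dvd_iff)
  then obtain c where c: "c < n" and "\<not> sig_poly \<sigma> (- int s) g dvd z c"
    using Gcd_eq_1_obtains_not_dvd[OF red prime_elem_sig_poly[OF pg]] by blast
  then have "\<not> g dvd sig_poly \<sigma> (int s) (z c)" by (simp add: sig_poly_dvd_iff)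
  moreover have "\<not> g dvd (\<Prod>i\<in>I. sig_poly \<sigma> (int i) d)"
    using gI prime_dvd_prod_iff[OF fin, of "normalize g"] pg by simp
  moreover have "g dvd \<mu> * (\<Prod>i\<in>I. sig_poly \<sigma> (int i) d) * sig_poly \<sigma> (int s) (z c)"
    using gd den[OF c] by (rule dvd_trans)
  ultimately show ?thesis using pg by (simp add: prime_elem_dvd_mult_iff)
qed

lemma extremal_factor_of_spread:
  assumes d0: "d \<noteq> 0" and k: "k \<in> spread \<sigma> (ap \<sigma> d) (ap \<sigma> d)"
  obtains g K where "prime_elem g" and "\<not> t_factor g" and "int k \<le> K"
    and "g dvd d" and "sig_poly \<sigma> K g dvd d" and "\<And>j. sig_poly \<sigma> j g dvd d \<Longrightarrow> 0 \<le> j \<and> j \<le> K"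
proof -
  obtain h where ph: "prime_elem h" and "h dvd ap \<sigma> d" and "h dvd sig_poly \<sigma> (int k) (ap \<sigma> d)"
    using k in_spread_iff[of "ap \<sigma> d"] d0 by (auto simp: ap_eq_0_iff)
  define f where "f = sig_poly \<sigma> (- int k) h"
  have pf: "prime_elem f" unfolding f_def using ph by (rule prime_elem_sig_poly)
  have f_ap: "f dvd ap \<sigma> d" and fk_ap: "sig_poly \<sigma> (int k) f dvd ap \<sigma> d"
    using \<open>h dvd sig_poly \<sigma> (int k) (ap \<sigma> d)\<close> \<open>h dvd ap \<sigma> d\<close> by (simp_all add: f_def sig_poly_dvd_iff)
  show ?thesis
    using extremal_shifts[OF d0 pf prime_dvd_ap_not_t_factor[OF pf f_ap d0]]
      dvd_trans[OF f_ap ap_dvd] dvd_trans[OF fk_ap ap_dvd] that by metis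
qed

lemma spread_ap_solution:
  assumes d0: "d \<noteq> 0" and m0: "m \<noteq> 0" and red: "Gcd (insert d (z ` {..<n})) = 1"
    and den_m: "\<And>c. c < n \<Longrightarrow> sig_poly \<sigma> (int l) d
      dvd m * (\<Prod>i\<in>{..l} - {l}. sig_poly \<sigma> (int i) d) * sig_poly \<sigma> (int l) (z c)"
    and den_p: "\<And>c. c < n \<Longrightarrow> sig_poly \<sigma> (int 0) d
      dvd p * (\<Prod>i\<in>{..lt} - {0}. sig_poly \<sigma> (int i) d) * sig_poly \<sigma> (int 0) (z c)"
    and k: "k \<in> spread \<sigma> (ap \<sigma> d) (ap \<sigma> d)"
  shows "\<exists>K\<ge>k. K \<in> spread \<sigma> (sig_poly \<sigma> (- int l) (ap \<sigma> m)) (ap \<sigma> p)"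
proof -
  obtain g K where pg: "prime_elem g" and nt: "\<not> t_factor g" and kK: "int k \<le> K"
    and gd: "g dvd d" and gKd: "sig_poly \<sigma> K g dvd d"
    and shifts: "\<And>j. sig_poly \<sigma> j g dvd d \<Longrightarrow> 0 \<le> j \<and> j \<le> K"
    using extremal_factor_of_spread[OF d0 k] by metis
  have "sig_poly \<sigma> (K + int l) g dvd m"
  proof (rule prime_dvd_denominator[OF prime_elem_sig_poly[OF pg] red _ _ _ den_m])
    show "sig_poly \<sigma> (K + int l) g dvd sig_poly \<sigma> (int l) d"
      using gKd by (simp add: sig_poly_dvd_iff)
    show "\<not> sig_poly \<sigma> (K + int l) g dvd sig_poly \<sigma> (int i) d" if "i \<in> {..l} - {l}" for i
      using that shifts[of "K + int l - int i"] by (auto simp: sig_poly_dvd_iff algebra_simps)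
  qed auto
  then have "sig_poly \<sigma> (K + int l) g dvd ap \<sigma> m"
    by (rule prime_dvd_ap[OF prime_elem_sig_poly[OF pg] not_t_factor_sig_poly[OF nt]])
  then have m_dvd: "sig_poly \<sigma> K g dvd sig_poly \<sigma> (- int l) (ap \<sigma> m)"
    by (simp add: sig_poly_dvd_iff algebra_simps)
  have "g dvd p"
  proof (rule prime_dvd_denominator[OF pg red _ _ _ den_p])
    show "\<not> g dvd sig_poly \<sigma> (int i) d" if "i \<in> {..lt} - {0}" for i
      using that shifts[of "- int i"] by (auto simp: sig_poly_dvd_iff)
  qed (use gd in auto)
  then have "sig_poly \<sigma> (int (nat K)) g dvd sig_poly \<sigma> (int (nat K)) (ap \<sigma> p)"
    using prime_dvd_ap[OF pg nt] by simp
  then have "nat K \<in> spread \<sigma> (sig_poly \<sigma> (- int l) (ap \<sigma> m)) (ap \<sigma> p)"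
    using m_dvd kK prime_elem_sig_poly[OF pg] m0
    by (subst in_spread_iff) (auto simp: ap_eq_0_iff intro!: exI[of _ "sig_poly \<sigma> K g"])
  then show ?thesis using kK by (intro exI[of _ "nat K"]) auto
qed

end

theorem lemma3:
  fixes \<sigma> :: "'a::{field_gcd,field_char_0} poly fract \<Rightarrow> 'a poly fract"
    and n l lt :: nat
    and A At :: "nat \<Rightarrow> nat \<Rightarrow> nat \<Rightarrow> 'a poly"
    and b z :: "nat \<Rightarrow> 'a poly"
    and P :: "nat \<Rightarrow> nat \<Rightarrow> int \<Rightarrow> 'a poly fract"
    and m p d :: "'a poly"
  assumes ext: "PiSigma_ext \<sigma>"
    and detAl: "det (pmat n (A l)) \<noteq> 0"
    and P_unimod: "unimodular \<sigma> n P"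
    and PA: "\<forall>r<n. \<forall>c<n. omat_mult \<sigma> n P (poly_omat l A) r c = poly_omat lt At r c"
    and Pb: "\<forall>r<n. \<exists>q. omat_apply \<sigma> n P (\<lambda>c. pf (b c)) r = pf q"
    and detAt0: "det (pmat n (At 0)) \<noteq> 0"
    and m_def: "the_common_denom n (the (mat_inverse (map_mat pf (pmat n (A l))))) m"
    and p_def: "the_common_denom n (the (mat_inverse (map_mat pf (pmat n (At 0))))) p"
    and d_nz: "d \<noteq> 0"
    and reduced: "Gcd (insert d (z ` {..<n})) = 1"
    and sol: "\<forall>r<n. omat_apply \<sigma> n (poly_omat l A) (\<lambda>c. pf (z c) / pf d) r = pf (b r)"
  shows "disp \<sigma> (ap \<sigma> d) (ap \<sigma> d) \<le> disp \<sigma> (sig_poly \<sigma> (- int l) (ap \<sigma> m)) (ap \<sigma> p)"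
proof -
  interpret PiSigma_extension \<sigma> using ext by unfold_locales
  let ?y = "\<lambda>c. pf (z c) / pf d"
  have m0: "m \<noteq> 0" and m: "common_denom n (the (mat_inverse (map_mat pf (pmat n (A l))))) m"
    and p: "common_denom n (the (mat_inverse (map_mat pf (pmat n (At 0))))) p"
    using m_def p_def by (simp_all add: the_common_denom_def common_denom_def)
  have solA: "omat_apply \<sigma> n (poly_omat l A) ?y r \<in> range pf" if "r < n" for r
    using sol that by simp
  have solAt: "omat_apply \<sigma> n (poly_omat lt At) ?y r \<in> range pf" if "r < n" for r
  proof -
    have "omat_apply \<sigma> n (poly_omat lt At) ?y r = omat_apply \<sigma> n P (\<lambda>c. pf (b c)) r"
      using P_unimod PA sol that
      by (intro omat_apply_product_system[OF _ poly_omat_finite]) (auto simp: unimodular_def)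
    then show ?thesis using Pb that by auto
  qed
  show ?thesis
    using solution_denominator[OF detAl order.refl m d_nz solA]
      solution_denominator[OF detAt0 le0 p d_nz solAt]
    by (intro disp_mono spread_ap_solution[OF d_nz m0 reduced]) auto
qed

end
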